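(* Assume $\varepsilon\max_i\delta_i<1$. Suppose that either (i) $\mathcal G$ is structurally balanced (i.e. $\lambda_1(\mathcal L)=0$), or (ii) $\mathcal G$ is structurally unbalanced and $\lambda_1(\mathcal L)<2-\lambda_n(\mathcal L)$. Then $\pi_1<\pi_{1,d}$.
   Context: Let $\mathcal G$ be an undirected, connected signed graph on $n$ nodes without self-loops, with symmetric adjacency matrix $A=[a_{ij}]$ having zero diagonal and entries of either sign. Let $\delta_i=\sum_j|a_{ij}|>0$, $\Delta=\mathrm{diag}(\delta_i)$, and let $\mathcal L=I-\Delta^{-1}A$ be the normalized signed Laplacian, with real eigenvalues $\lambda_1(\mathcal L)\le\dots\le\lambda_n(\mathcal L)$. Structural balance means there is a signature matrix $S$ (diagonal with $\pm1$ entries) such that $SAS\ge0$ entrywise. Let $\varepsilon>0$ be a step size and, for $\pi>0$, let $L_\pi=\Delta-\pi A$ and $J_\pi=I-\varepsilon L_\pi$, both symmetric. Define $\pi_1=\frac{1}{1-\lambda_1(\mathcal L)}$; this is the value of $\pi$ at which $\lambda_1(L_\pi)=0$, equivalently $\lambda_n(J_\pi)=1$. Define $\pi_{1,d}$ as the smallest $\pi>0$ at which $\lambda_n(L_\pi)=2/\varepsilon$, equivalently $\lambda_1(J_\pi)=-1$. *)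

theory Defs
  imports "HOL-Analysis.Analysis"
begin

text \<open>Signed graph on the node type 'n (finite, n = CARD('n)), given by its
real adjacency matrix A.\<close>

definition deg :: "real^'n^'n \<Rightarrow> 'n::finite \<Rightarrow> real" where
  "deg A i = (\<Sum>j\<in>UNIV. \<bar>A$i$j\<bar>)"

definition Delta :: "real^'n^'n \<Rightarrow> real^'n^'n::finite" where
  "Delta A = (\<chi> i j. if i = j then deg A i else 0)"

definition normLap :: "real^'n^'n \<Rightarrow> real^'n^'n::finite" where
  "normLap A = mat 1 - matrix_inv (Delta A) ** A"

definition Lpi :: "real^'n^'n \<Rightarrow> real \<Rightarrow> real^'n^'n::finite" where
  "Lpi A p = Delta A - p *\<^sub>R A"

definition real_eigenvalues :: "real^'n^'n \<Rightarrow> real set" where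
  "real_eigenvalues M = {l. \<exists>v::real^'n. v \<noteq> 0 \<and> M *v v = l *\<^sub>R v}"

definition lam_min :: "real^'n^'n \<Rightarrow> real" where
  "lam_min M = Min (real_eigenvalues M)"

definition lam_max :: "real^'n^'n \<Rightarrow> real" where
  "lam_max M = Max (real_eigenvalues M)"

definition connected_signed :: "real^'n^'n \<Rightarrow> bool" where
  "connected_signed A \<longleftrightarrow> (\<forall>i j. (\<lambda>x y. A$x$y \<noteq> 0)\<^sup>*\<^sup>* i j)"

definition structurally_balanced :: "real^'n^'n \<Rightarrow> bool" where
  "structurally_balanced A \<longleftrightarrow>
     (\<exists>S::real^'n^'n. (\<forall>i j. i \<noteq> j \<longrightarrow> S$i$j = 0) \<and> (\<forall>i. S$i$i = 1 \<or> S$i$i = -1)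
        \<and> (\<forall>i j. (S ** A ** S)$i$j \<ge> 0))"

definition pi1 :: "real^'n^'n \<Rightarrow> real" where
  "pi1 A = 1 / (1 - lam_min (normLap A))"

definition pi1d :: "real \<Rightarrow> real^'n^'n \<Rightarrow> real" where
  "pi1d eps A = (LEAST p::real. 0 < p \<and> lam_max (Lpi A p) = 2 / eps)"

end

theory Submission
  imports Defs
begin

text \<open>Write \<open>Q\<^sub>M v = v \<bullet> M v\<close>. The normalised Laplacian is conjugate to a symmetric matrix,
  so its extreme eigenvalues satisfy \<open>\<lambda>\<^sub>1 Q\<^sub>\<Delta> \<le> Q\<^sub>\<Delta> - Q\<^sub>A \<le> \<lambda>\<^sub>n Q\<^sub>\<Delta>\<close>. In both cases of the
  hypothesis this yields \<open>\<lambda>\<^sub>1 < 1\<close> and \<open>\<lambda>\<^sub>1 + \<lambda>\<^sub>n \<le> 2\<close>, hence \<open>-\<pi>\<^sub>1 Q\<^sub>A \<le> Q\<^sub>\<Delta>\<close>, i.e.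
  \<open>Q(L\<^sub>\<pi>\<^sub>1) \<le> 2 Q\<^sub>\<Delta>\<close>; together with \<open>\<epsilon> max \<delta>\<^sub>i < 1\<close> this gives \<open>\<lambda>\<^sub>n(L\<^sub>\<pi>\<^sub>1) < 2/\<epsilon>\<close>, and
  likewise \<open>\<lambda>\<^sub>n(L\<^sub>0) < 2/\<epsilon>\<close>. As a maximum of affine functions of \<open>\<pi>\<close>, \<open>g \<pi> = \<lambda>\<^sub>n(L\<^sub>\<pi>)\<close> is
  convex, and it is unbounded because \<open>Q\<^sub>A\<close> takes negative values. A convex function that is
  below the level \<open>2/\<epsilon>\<close> at \<open>0\<close> and at \<open>\<pi>\<^sub>1\<close> reaches it at exactly one point of \<open>(0, \<infinity>)\<close>,
  and that point, \<open>\<pi>\<^sub>1\<^sub>,\<^sub>d\<close>, lies beyond \<open>\<pi>\<^sub>1\<close>.\<close>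

section \<open>Extreme eigenvalues of symmetric matrices\<close>

definition quad_form :: "real^'n^'n \<Rightarrow> real^'n \<Rightarrow> real" where
  "quad_form M v = v \<bullet> (M *v v)"

lemma transpose_eq_nth_commute:
  fixes M :: "'a^'n^'n"
  assumes "transpose M = M"
  shows "M $ j $ i = M $ i $ j"
proof -
  have "M $ j $ i = transpose M $ i $ j" by (simp add: transpose_def)
  with assms show ?thesis by simp
qed

lemma symmetric_inner_matrix_vector:
  fixes M :: "real^'n^'n::finite"
  assumes "transpose M = M"
  shows "x \<bullet> (M *v y) = y \<bullet> (M *v x)"
  by (metis assms dot_lmul_matrix inner_commute vector_transpose_matrix)

lemma quad_form_scaleR: "quad_form M (c *\<^sub>R v) = c^2 * quad_form M v"
  by (simp add: quad_form_def matrix_vector_mult_scaleR power2_eq_square)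

lemma quad_form_uminus_matrix: "quad_form (- M) v = - quad_form M v"
  by (simp add: quad_form_def matrix_vector_mult_def inner_vec_def sum_negf)

lemma quad_form_add:
  fixes M :: "real^'n^'n::finite"
  assumes "transpose M = M"
  shows "quad_form M (v + t *\<^sub>R w) = quad_form M v + 2 * t * (w \<bullet> (M *v v)) + t^2 * quad_form M w"
  using symmetric_inner_matrix_vector[OF assms, of v w]
  by (simp add: quad_form_def matrix_vector_right_distrib matrix_vector_mult_scaleR
      inner_add_left inner_add_right power2_eq_square algebra_simps)

lemma linear_plus_quadratic_nonpos_imp_zero:
  fixes a b :: real
  assumes "\<And>t. a * t + b * t^2 \<le> 0"
  shows "a = 0"
proof (rule ccontr)
  assume "a \<noteq> 0"
  define s where "s = 1 / (\<bar>b\<bar> + 1)"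
  have "s > 0"
    unfolding s_def by (simp add: add_pos_nonneg)
  have "\<bar>b\<bar> * s < 1"
    unfolding s_def by (simp add: divide_simps)
  moreover have "- (b * s) \<le> \<bar>b\<bar> * s"
    using mult_right_mono[OF abs_ge_minus_self[of b]] \<open>s > 0\<close> by simp
  ultimately have "1 + b * s > 0"
    by linarith
  with \<open>a \<noteq> 0\<close> \<open>s > 0\<close> have "a\<^sup>2 * s * (1 + b * s) > 0"
    by simp
  moreover have "a * (a * s) + b * (a * s)^2 = a\<^sup>2 * s * (1 + b * s)"
    by (simp add: power2_eq_square algebra_simps)
  ultimately show False
    using assms[of "a * s"] by linarith
qed

text \<open>Eigenvectors for distinct eigenvalues of a symmetric matrix are orthogonal, hence
  independent, so there are at most \<open>CARD('n)\<close> eigenvalues.\<close>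

lemma finite_real_eigenvalues_symmetric:
  fixes M :: "real^'n^'n::finite"
  assumes sym: "transpose M = M"
  shows "finite (real_eigenvalues M)"
proof -
  define E where "E = real_eigenvalues M"
  define f where "f l = (SOME v. v \<noteq> 0 \<and> M *v v = l *\<^sub>R v)" for l
  have f: "f l \<noteq> 0 \<and> M *v f l = l *\<^sub>R f l" if "l \<in> E" for l
    using that unfolding E_def real_eigenvalues_def f_def by (metis (mono_tags, lifting) mem_Collect_eq someI_ex)
  have "inj_on f E"
  proof (rule inj_onI)
    fix x y assume "x \<in> E" "y \<in> E" "f x = f y"
    then show "x = y" using f by (metis scaleR_cancel_right)
  qed
  moreover have "pairwise orthogonal (f ` E)"
  proof (clarsimp simp: pairwise_def orthogonal_def)
    fix x y assume "x \<in> E" "y \<in> E" "f x \<noteq> f y"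
    then have "x \<noteq> y" by auto
    have "f y \<bullet> (M *v f x) = f x \<bullet> (M *v f y)"
      by (rule symmetric_inner_matrix_vector[OF sym])
    then have "(x - y) * (f x \<bullet> f y) = 0"
      using f \<open>x \<in> E\<close> \<open>y \<in> E\<close> by (simp add: inner_commute algebra_simps)
    then show "f x \<bullet> f y = 0" using \<open>x \<noteq> y\<close> by simp
  qed
  moreover have "0 \<notin> f ` E" using f by auto
  ultimately have "finite (f ` E)"
    using pairwise_orthogonal_independent finiteI_independent by blast
  with \<open>inj_on f E\<close> show ?thesis
    unfolding E_def using finite_image_iff by blast
qed

text \<open>A maximiser of the quadratic form on the unit sphere is an eigenvector, because the
  first variation of the Rayleigh quotient vanishes there.\<close>

lemma symmetric_quad_form_max_eigenvector:
  fixes M :: "real^'n^'n::finite"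
  assumes sym: "transpose M = M"
  obtains v where "v \<bullet> v = 1" "M *v v = quad_form M v *\<^sub>R v"
    "\<And>u. quad_form M u \<le> quad_form M v * (u \<bullet> u)"
proof -
  have "continuous_on (sphere 0 1) (quad_form M)"
    unfolding quad_form_def by (intro continuous_intros)
  moreover have "sphere (0::real^'n) 1 \<noteq> {}" by simp
  ultimately obtain v where v: "v \<in> sphere (0::real^'n) 1"
    and vmax: "\<And>u. u \<in> sphere 0 1 \<Longrightarrow> quad_form M u \<le> quad_form M v"
    using continuous_attains_sup[OF compact_sphere] by blast
  define lam where "lam = quad_form M v"
  have vv: "v \<bullet> v = 1" using v by (simp add: dot_square_norm)
  have bound: "quad_form M u \<le> lam * (u \<bullet> u)" for u
  proof (cases "u = 0")
    case True then show ?thesis by (simp add: quad_form_def)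
  next
    case False
    have "quad_form M ((1 / norm u) *\<^sub>R u) \<le> lam"
      using vmax False unfolding lam_def by simp
    then show ?thesis
      using False by (simp add: quad_form_scaleR power_divide dot_square_norm divide_simps mult.commute)
  qed
  have "w \<bullet> (M *v v - lam *\<^sub>R v) = 0" for w
  proof -
    have "2 * (w \<bullet> (M *v v) - lam * (w \<bullet> v)) * t + (quad_form M w - lam * (w \<bullet> w)) * t^2 \<le> 0" for t
      using bound[of "v + t *\<^sub>R w"] quad_form_add[OF sym, of v t w] vv
      by (simp add: lam_def inner_add_left inner_add_right inner_commute power2_eq_square algebra_simps)
    then show ?thesis
      using linear_plus_quadratic_nonpos_imp_zero by (force simp: inner_diff_right)
  qed
  from this[of "M *v v - lam *\<^sub>R v"] have "M *v v = lam *\<^sub>R v" by simp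
  with that vv bound show ?thesis unfolding lam_def by blast
qed

lemma lam_max_eq_quad_form_maximiser:
  fixes M :: "real^'n^'n::finite"
  assumes sym: "transpose M = M" and v: "v \<bullet> v = 1" "M *v v = quad_form M v *\<^sub>R v"
    and vmax: "\<And>u. quad_form M u \<le> quad_form M v * (u \<bullet> u)"
  shows "lam_max M = quad_form M v"
  unfolding lam_max_def
proof (rule Max_eqI[OF finite_real_eigenvalues_symmetric[OF sym]])
  show "quad_form M v \<in> real_eigenvalues M"
    using v unfolding real_eigenvalues_def by (auto intro!: exI[of _ v])
  fix l assume "l \<in> real_eigenvalues M"
  then obtain u where "u \<noteq> 0" "M *v u = l *\<^sub>R u" unfolding real_eigenvalues_def by blast
  then show "l \<le> quad_form M v"
    using vmax[of u] by (simp add: quad_form_def)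
qed

lemma quad_form_le_lam_max:
  fixes M :: "real^'n^'n::finite"
  assumes "transpose M = M"
  shows "quad_form M u \<le> lam_max M * (u \<bullet> u)"
proof -
  obtain v where "v \<bullet> v = 1" "M *v v = quad_form M v *\<^sub>R v"
    "\<And>u. quad_form M u \<le> quad_form M v * (u \<bullet> u)"
    using symmetric_quad_form_max_eigenvector[OF assms] by blast
  with lam_max_eq_quad_form_maximiser[OF assms] show ?thesis by simp
qed

lemma lam_max_attained:
  fixes M :: "real^'n^'n::finite"
  assumes "transpose M = M"
  obtains v where "v \<noteq> 0" "quad_form M v = lam_max M * (v \<bullet> v)"
proof -
  obtain v where "v \<bullet> v = 1" "M *v v = quad_form M v *\<^sub>R v"
    "\<And>u. quad_form M u \<le> quad_form M v * (u \<bullet> u)"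
    using symmetric_quad_form_max_eigenvector[OF assms] by blast
  moreover from this have "v \<noteq> 0" by auto
  ultimately show ?thesis
    using that lam_max_eq_quad_form_maximiser[OF assms] by simp
qed

lemma lam_max_leI:
  fixes M :: "real^'n^'n::finite"
  assumes "transpose M = M" and "\<And>u. quad_form M u \<le> b * (u \<bullet> u)"
  shows "lam_max M \<le> b"
proof -
  obtain v where "v \<noteq> 0" "quad_form M v = lam_max M * (v \<bullet> v)"
    using lam_max_attained[OF assms(1)] .
  with assms(2)[of v] show ?thesis by simp
qed

lemma real_eigenvalues_uminus: "real_eigenvalues (- M) = uminus ` real_eigenvalues M"
proof -
  have neg: "(- M) *v v = - (M *v v)" for v
    by (simp add: matrix_vector_mult_def vec_eq_iff sum_negf)
  have "(- M) *v v = l *\<^sub>R v \<longleftrightarrow> M *v v = (- l) *\<^sub>R v" for v l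
    unfolding neg scaleR_minus_left by (metis minus_minus)
  then have eig: "l \<in> real_eigenvalues (- M) \<longleftrightarrow> - l \<in> real_eigenvalues M" for l
    unfolding real_eigenvalues_def by simp
  show ?thesis
  proof (rule set_eqI)
    show "l \<in> real_eigenvalues (- M) \<longleftrightarrow> l \<in> uminus ` real_eigenvalues M" for l
      using eig[of l] image_eqI[of l uminus "- l"] by auto
  qed
qed

lemma lam_min_eq_uminus_lam_max_uminus:
  fixes M :: "real^'n^'n::finite"
  assumes sym: "transpose M = M"
  shows "lam_min M = - lam_max (- M)"
proof -
  have "transpose (- M) = - M"
    using sym by (simp add: transpose_def vec_eq_iff)
  then obtain v where "v \<bullet> v = 1" "(- M) *v v = quad_form (- M) v *\<^sub>R v"
    using symmetric_quad_form_max_eigenvector by blast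
  then have "real_eigenvalues (- M) \<noteq> {}"
    unfolding real_eigenvalues_def by (auto intro!: exI[of _ v])
  moreover have "finite (real_eigenvalues M)"
    by (rule finite_real_eigenvalues_symmetric[OF sym])
  ultimately show ?thesis
    unfolding lam_min_def lam_max_def real_eigenvalues_uminus by (simp add: image_image)
qed

lemma lam_min_le_quad_form:
  fixes M :: "real^'n^'n::finite"
  assumes sym: "transpose M = M"
  shows "lam_min M * (u \<bullet> u) \<le> quad_form M u"
proof -
  have "transpose (- M) = - M"
    using sym by (simp add: transpose_def vec_eq_iff)
  from quad_form_le_lam_max[OF this, of u] show ?thesis
    by (simp add: lam_min_eq_uminus_lam_max_uminus[OF sym] quad_form_uminus_matrix)
qed

section \<open>The largest eigenvalue along a pencil\<close>

lemma quad_form_diff_scaleR: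
  "quad_form (M - p *\<^sub>R N) v = quad_form M v - p * quad_form N v"
  by (simp add: quad_form_def matrix_vector_mult_diff_rdistrib inner_diff_right
      scaleR_matrix_vector_assoc[symmetric])

lemma convex_on_lam_max_pencil:
  fixes M N :: "real^'n^'n::finite"
  assumes "transpose M = M" "transpose N = N"
  shows "convex_on UNIV (\<lambda>p. lam_max (M - p *\<^sub>R N))"
proof (rule convex_onI)
  have sym: "transpose (M - p *\<^sub>R N) = M - p *\<^sub>R N" for p
    using assms by (simp add: transpose_def vec_eq_iff)
  fix t p q :: real assume "0 < t" "t < 1"
  show "lam_max (M - ((1 - t) *\<^sub>R p + t *\<^sub>R q) *\<^sub>R N)
    \<le> (1 - t) * lam_max (M - p *\<^sub>R N) + t * lam_max (M - q *\<^sub>R N)"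
  proof (rule lam_max_leI[OF sym])
    fix u
    have "quad_form (M - ((1 - t) *\<^sub>R p + t *\<^sub>R q) *\<^sub>R N) u
        = (1 - t) * quad_form (M - p *\<^sub>R N) u + t * quad_form (M - q *\<^sub>R N) u"
      by (simp only: quad_form_diff_scaleR) (simp add: algebra_simps)
    also have "\<dots> \<le> (1 - t) * (lam_max (M - p *\<^sub>R N) * (u \<bullet> u)) + t * (lam_max (M - q *\<^sub>R N) * (u \<bullet> u))"
      using \<open>0 < t\<close> \<open>t < 1\<close> by (intro add_mono mult_left_mono quad_form_le_lam_max sym) auto
    finally show "quad_form (M - ((1 - t) *\<^sub>R p + t *\<^sub>R q) *\<^sub>R N) u
        \<le> ((1 - t) * lam_max (M - p *\<^sub>R N) + t * lam_max (M - q *\<^sub>R N)) * (u \<bullet> u)"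
      by (simp add: algebra_simps)
  qed
qed simp

lemma lam_max_pencil_unbounded:
  fixes M N :: "real^'n^'n::finite"
  assumes "transpose M = M" "transpose N = N" and "quad_form N v < 0"
  obtains P where "P > 0" "c \<le> lam_max (M - P *\<^sub>R N)"
proof -
  have sym: "transpose (M - P *\<^sub>R N) = M - P *\<^sub>R N" for P
    using assms by (simp add: transpose_def vec_eq_iff)
  have "v \<noteq> 0" using assms(3) by (auto simp: quad_form_def)
  then have vv: "v \<bullet> v > 0" by simp
  define P where "P = (\<bar>c\<bar> * (v \<bullet> v) + \<bar>quad_form M v\<bar>) / (- quad_form N v) + 1"
  have "(\<bar>c\<bar> * (v \<bullet> v) + \<bar>quad_form M v\<bar>) / (- quad_form N v) \<ge> 0"
    using assms(3) vv by (intro divide_nonneg_pos add_nonneg_nonneg) auto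
  then have "P > 0" unfolding P_def by linarith
  have "c * (v \<bullet> v) \<le> quad_form M v - P * quad_form N v"
  proof -
    have "- P * quad_form N v = \<bar>c\<bar> * (v \<bullet> v) + \<bar>quad_form M v\<bar> - quad_form N v"
      unfolding P_def using assms(3) by (simp add: field_simps)
    moreover have "c * (v \<bullet> v) \<le> \<bar>c\<bar> * (v \<bullet> v)"
      using vv by (simp add: mult_right_mono)
    ultimately show ?thesis using assms(3) by linarith
  qed
  also have "\<dots> \<le> lam_max (M - P *\<^sub>R N) * (v \<bullet> v)"
    using quad_form_le_lam_max[OF sym] by (simp add: quad_form_diff_scaleR)
  finally have "c \<le> lam_max (M - P *\<^sub>R N)" using vv by simp
  with \<open>P > 0\<close> that show ?thesis by blast
qed

text \<open>By convexity and \<open>g 0 < c\<close>, the function stays below \<open>c\<close> to the left of any point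
  where it is at most \<open>c\<close>; so the level \<open>c\<close> is reached at exactly one \<open>q > 0\<close>.\<close>

lemma convex_first_crossing_gt:
  fixes g :: "real \<Rightarrow> real"
  assumes conv: "convex_on UNIV g" and "g 0 < c" and "0 < p" "g p < c" and "0 < P" "c \<le> g P"
  shows "p < (LEAST q. 0 < q \<and> g q = c)"
proof -
  have below: "g q < c" if "0 < q" "q < r" "g r \<le> c" for q r
  proof -
    define t where "t = q / r"
    have t: "0 < t" "t < 1" using that unfolding t_def by auto
    have "g q = g ((1 - t) *\<^sub>R 0 + t *\<^sub>R r)"
      unfolding t_def using that by simp
    also have "\<dots> \<le> (1 - t) * g 0 + t * g r"
      using convex_onD[OF conv, of t 0 r] t by simp
    also have "\<dots> < (1 - t) * c + t * c"
      using t \<open>g 0 < c\<close> that(3) by (intro add_less_le_mono mult_strict_left_mono mult_left_mono) auto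
    finally show ?thesis by (simp add: algebra_simps)
  qed
  have "continuous_on {0..P} g"
    using convex_on_continuous[OF open_UNIV conv] continuous_on_subset by blast
  then obtain b where b: "0 \<le> b" "b \<le> P" "g b = c"
    using IVT'[of g 0 c P] \<open>g 0 < c\<close> \<open>0 < P\<close> \<open>c \<le> g P\<close> by auto
  have "b \<noteq> 0" using b \<open>g 0 < c\<close> by auto
  with b have "0 < b" by simp
  have "(LEAST q. 0 < q \<and> g q = c) = b"
  proof (rule Least_equality)
    show "0 < b \<and> g b = c" using \<open>0 < b\<close> b by simp
    fix q assume "0 < q \<and> g q = c"
    then show "b \<le> q" using below[of q b] b by (cases "q < b") auto
  qed
  moreover have "\<not> b \<le> p"
    using below[of b p] \<open>0 < b\<close> b \<open>g p < c\<close> by (cases "b = p") auto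
  ultimately show ?thesis by simp
qed

section \<open>Degree matrix and quadratic forms of the graph\<close>

definition diag_mat :: "('n \<Rightarrow> real) \<Rightarrow> real^'n^'n::finite" where
  "diag_mat d = (\<chi> i j. if i = j then d i else 0)"

lemma diag_mat_matrix_mult_nth: "(diag_mat d ** M) $ i $ j = d i * M $ i $ j"
  by (simp add: diag_mat_def matrix_matrix_mult_def if_distrib[of "\<lambda>x. x * _"] cong: if_cong)

lemma matrix_mult_diag_mat_nth: "(M ** diag_mat d) $ i $ j = M $ i $ j * d j"
  by (simp add: diag_mat_def matrix_matrix_mult_def if_distrib[of "\<lambda>x. _ * x"] cong: if_cong)

lemma diag_mat_mult_vector: "diag_mat d *v v = (\<chi> i. d i * v $ i)"
  by (simp add: diag_mat_def matrix_vector_mult_def vec_eq_iff if_distrib[of "\<lambda>x. x * _"] cong: if_cong)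

lemma matrix_inv_eqI:
  fixes M X :: "real^'n^'n::finite"
  assumes "M ** X = mat 1" "X ** M = mat 1"
  shows "matrix_inv M = X"
proof -
  have inv: "M ** matrix_inv M = mat 1 \<and> matrix_inv M ** M = mat 1"
    unfolding matrix_inv_def by (rule someI[of _ X]) (use assms in blast)
  have "matrix_inv M = matrix_inv M ** (M ** X)"
    by (simp add: assms(1))
  also have "\<dots> = X"
    using inv by (simp add: matrix_mul_assoc)
  finally show ?thesis .
qed

lemma matrix_inv_diag_mat:
  assumes "\<forall>i. d i \<noteq> 0"
  shows "matrix_inv (diag_mat d) = diag_mat (\<lambda>i. 1 / d i)"
  by (rule matrix_inv_eqI)
    (use assms in \<open>simp_all add: vec_eq_iff diag_mat_matrix_mult_nth, simp_all add: diag_mat_def mat_def\<close>)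

lemma deg_nonneg: "0 \<le> deg A i"
  by (simp add: deg_def sum_nonneg)

lemma Delta_eq_diag_mat: "Delta A = diag_mat (deg A)"
  by (simp add: Delta_def diag_mat_def)

lemma normLap_mult_vector:
  assumes "\<forall>i. deg A i > 0"
  shows "normLap A *v v = v - (\<chi> i. (A *v v) $ i / deg A i)"
proof -
  have "matrix_inv (Delta A) = diag_mat (\<lambda>i. 1 / deg A i)"
    unfolding Delta_eq_diag_mat using assms by (intro matrix_inv_diag_mat) (simp add: less_imp_neq[symmetric])
  then show ?thesis
    by (simp add: normLap_def matrix_vector_mult_diff_rdistrib diag_mat_mult_vector
        flip: matrix_vector_mul_assoc)
qed

lemma quad_form_Delta: "quad_form (Delta A) v = (\<Sum>i\<in>UNIV. deg A i * (v $ i)\<^sup>2)"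
  by (simp add: quad_form_def Delta_eq_diag_mat diag_mat_mult_vector inner_vec_def
      power2_eq_square algebra_simps)

lemma quad_form_matrix: "quad_form A v = (\<Sum>i\<in>UNIV. \<Sum>j\<in>UNIV. v $ i * A $ i $ j * v $ j)"
  by (simp add: quad_form_def inner_vec_def matrix_vector_mult_def sum_distrib_left algebra_simps)

lemma quad_form_Lpi: "quad_form (Lpi A p) v = quad_form (Delta A) v - p * quad_form A v"
  by (simp add: Lpi_def quad_form_diff_scaleR)

lemma transpose_Delta: "transpose (Delta A) = Delta A"
  by (simp add: Delta_def transpose_def vec_eq_iff)

lemma transpose_Lpi:
  assumes "transpose A = A"
  shows "transpose (Lpi A p) = Lpi A p"
  using assms by (simp add: Lpi_def Delta_def transpose_def vec_eq_iff)

lemma quad_form_Delta_le: "quad_form (Delta A) v \<le> Max (range (deg A)) * (v \<bullet> v)"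
proof -
  have "(\<Sum>i\<in>UNIV. deg A i * (v $ i)\<^sup>2) \<le> (\<Sum>i\<in>UNIV. Max (range (deg A)) * (v $ i)\<^sup>2)"
    by (intro sum_mono mult_right_mono Max_ge) auto
  then show ?thesis
    by (simp add: quad_form_Delta inner_vec_def sum_distrib_left power2_eq_square)
qed

lemma quad_form_Delta_pos:
  assumes "\<forall>i. deg A i > 0" "v \<noteq> 0"
  shows "quad_form (Delta A) v > 0"
proof -
  obtain k where k: "v $ k \<noteq> 0" using assms(2) by (auto simp: vec_eq_iff)
  have "0 < deg A k * (v $ k)\<^sup>2" using k assms(1) by simp
  also have "\<dots> \<le> (\<Sum>i\<in>UNIV. deg A i * (v $ i)\<^sup>2)"
    by (rule member_le_sum) (use assms(1) in \<open>auto simp: less_imp_le\<close>)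
  finally show ?thesis unfolding quad_form_Delta .
qed

lemma abs_quad_form_le_Delta:
  assumes sym: "transpose A = A"
  shows "\<bar>quad_form A v\<bar> \<le> quad_form (Delta A) v"
proof -
  have swap: "(\<Sum>i\<in>UNIV. \<Sum>j\<in>UNIV. \<bar>A $ i $ j\<bar> * (v $ j)\<^sup>2) = quad_form (Delta A) v"
    using transpose_eq_nth_commute[OF sym]
    by (subst sum.swap) (simp add: quad_form_Delta deg_def sum_distrib_right)
  have "\<bar>quad_form A v\<bar> \<le> (\<Sum>i\<in>UNIV. \<Sum>j\<in>UNIV. \<bar>v $ i * A $ i $ j * v $ j\<bar>)"
    unfolding quad_form_matrix by (rule order_trans[OF sum_abs]) (intro sum_mono sum_abs)
  also have "\<dots> \<le> (\<Sum>i\<in>UNIV. \<Sum>j\<in>UNIV. (\<bar>A $ i $ j\<bar> * (v $ i)\<^sup>2 + \<bar>A $ i $ j\<bar> * (v $ j)\<^sup>2) / 2)"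
  proof (intro sum_mono)
    fix i j
    have "2 * \<bar>v $ i * v $ j\<bar> \<le> (v $ i)\<^sup>2 + (v $ j)\<^sup>2"
      using sum_squares_bound[of "\<bar>v $ i\<bar>" "\<bar>v $ j\<bar>"] by (simp add: abs_mult)
    from mult_left_mono[OF this abs_ge_zero[of "A $ i $ j"]]
    show "\<bar>v $ i * A $ i $ j * v $ j\<bar> \<le> (\<bar>A $ i $ j\<bar> * (v $ i)\<^sup>2 + \<bar>A $ i $ j\<bar> * (v $ j)\<^sup>2) / 2"
      by (simp add: abs_mult algebra_simps)
  qed
  also have "\<dots> = quad_form (Delta A) v"
    using swap by (simp add: sum.distrib sum_divide_distrib[symmetric] add_divide_distrib
        quad_form_Delta deg_def sum_distrib_right)
  finally show ?thesis .
qed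

lemma structurally_balanced_quad_form_eq_Delta:
  fixes A :: "real^'n^'n::finite"
  assumes "structurally_balanced A"
  obtains v where "v \<noteq> 0" "quad_form A v = quad_form (Delta A) v"
proof -
  obtain S :: "real^'n^'n" where S: "\<forall>i j. i \<noteq> j \<longrightarrow> S $ i $ j = 0"
    "\<forall>i. S $ i $ i = 1 \<or> S $ i $ i = -1" "\<forall>i j. (S ** A ** S) $ i $ j \<ge> 0"
    using assms unfolding structurally_balanced_def by (elim exE conjE) (rule that)
  define s where "s = (\<chi> i. S $ i $ i)"
  have "S = diag_mat (($) s)"
    using S(1) by (auto simp: vec_eq_iff diag_mat_def s_def)
  then have SAS: "(S ** A ** S) $ i $ j = s $ i * A $ i $ j * s $ j" for i j
    by (simp add: diag_mat_matrix_mult_nth matrix_mult_diag_mat_nth)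
  have abs_s: "\<bar>s $ i\<bar> = 1" for i
    using S(2) by (cases "S $ i $ i = 1") (auto simp: s_def)
  have "s $ i * A $ i $ j * s $ j = \<bar>A $ i $ j\<bar>" for i j
  proof -
    have "0 \<le> s $ i * A $ i $ j * s $ j"
      using S(3) unfolding SAS by blast
    then have "s $ i * A $ i $ j * s $ j = \<bar>s $ i * A $ i $ j * s $ j\<bar>"
      by simp
    also have "\<dots> = \<bar>A $ i $ j\<bar>"
      by (simp add: abs_mult abs_s)
    finally show ?thesis .
  qed
  moreover have "(s $ i)\<^sup>2 = 1" for i
    using abs_s[of i] power2_abs[of "s $ i"] by simp
  ultimately have "quad_form A s = quad_form (Delta A) s"
    unfolding quad_form_Delta by (simp add: quad_form_matrix deg_def)
  moreover have "s \<noteq> 0"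
  proof
    assume "s = 0"
    then show False using abs_s[of undefined] by simp
  qed
  ultimately show ?thesis using that by blast
qed

text \<open>The witness is \<open>e_i - sgn(A_ij) e_j\<close> for an edge \<open>{i, j}\<close>; the form takes the value
  \<open>-2 |A_ij|\<close> there.\<close>

lemma exists_quad_form_neg:
  fixes A :: "real^'n^'n::finite"
  assumes sym: "transpose A = A" and zero_diag: "\<forall>i. A $ i $ i = 0"
    and deg_pos: "\<forall>i. deg A i > 0"
  obtains v where "quad_form A v < 0"
proof -
  fix i :: 'n
  have "(\<Sum>j\<in>UNIV. \<bar>A $ i $ j\<bar>) \<noteq> 0"
    using deg_pos unfolding deg_def by (simp add: less_imp_neq[symmetric])
  then have "\<exists>j. A $ i $ j \<noteq> 0"
    by (rule contrapos_np) simp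
  then obtain j where "A $ i $ j \<noteq> 0" ..
  define s where "s = sgn (A $ i $ j)"
  define v :: "real^'n" where "v = axis i 1 - s *\<^sub>R axis j 1"
  have col: "(A *v axis k 1) $ m = A $ m $ k" for k m
    by (simp add: matrix_vector_mult_def axis_def if_distrib[of "\<lambda>x. _ * x"] cong: if_cong)
  have Av: "A *v v = A *v axis i 1 - s *\<^sub>R (A *v axis j 1)"
    unfolding v_def by (simp add: matrix_vector_mult_diff_distrib matrix_vector_mult_scaleR)
  have "A $ j $ i = A $ i $ j"
    using sym by (rule transpose_eq_nth_commute)
  have "quad_form A v = (A *v v) $ i - s * (A *v v) $ j"
    unfolding quad_form_def v_def by (simp add: inner_diff_left inner_axis')
  also have "\<dots> = (A $ i $ i - s * A $ i $ j) - s * (A $ j $ i - s * A $ j $ j)"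
    unfolding Av by (simp add: col)
  also have "\<dots> = - 2 * s * A $ i $ j"
    using zero_diag \<open>A $ j $ i = A $ i $ j\<close> by (simp add: algebra_simps)
  also have "\<dots> = - 2 * \<bar>A $ i $ j\<bar>"
    by (simp add: s_def abs_sgn mult.commute)
  finally have "quad_form A v < 0"
    using \<open>A $ i $ j \<noteq> 0\<close> by simp
  then show ?thesis by (rule that)
qed

section \<open>The symmetric normalised Laplacian\<close>

definition deg_scale :: "real^'n^'n \<Rightarrow> real^'n \<Rightarrow> real^'n::finite" where
  "deg_scale A v = (\<chi> i. sqrt (deg A i) * v $ i)"

text \<open>\<open>I - \<Delta>^(-1/2) A \<Delta>^(-1/2)\<close>, conjugate to \<^const>\<open>normLap\<close> by \<^const>\<open>deg_scale\<close> \<open>= \<Delta>^(1/2)\<close>.\<close>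

definition sym_normLap :: "real^'n^'n \<Rightarrow> real^'n^'n::finite" where
  "sym_normLap A = (\<chi> i j. (if i = j then 1 else 0) - A $ i $ j / (sqrt (deg A i) * sqrt (deg A j)))"

lemma transpose_sym_normLap:
  assumes "transpose A = A"
  shows "transpose (sym_normLap A) = sym_normLap A"
  using transpose_eq_nth_commute[OF assms]
  by (simp add: sym_normLap_def transpose_def vec_eq_iff mult.commute)

lemma sym_normLap_deg_scale:
  assumes "\<forall>i. deg A i > 0"
  shows "sym_normLap A *v deg_scale A v = deg_scale A (normLap A *v v)"
proof -
  have "(sym_normLap A *v deg_scale A v) $ i = sqrt (deg A i) * v $ i - (A *v v) $ i / sqrt (deg A i)" for i
  proof -
    have "(sym_normLap A *v deg_scale A v) $ i
        = (\<Sum>j\<in>UNIV. (if i = j then sqrt (deg A j) * v $ j else 0) - A $ i $ j * v $ j / sqrt (deg A i))"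
      using assms by (auto simp: sym_normLap_def deg_scale_def matrix_vector_mult_def
          left_diff_distrib less_imp_neq[symmetric] intro!: sum.cong)
    then show ?thesis
      by (simp add: sum_subtractf matrix_vector_mult_def sum_divide_distrib)
  qed
  moreover have "sqrt (deg A i) * ((A *v v) $ i / deg A i) = (A *v v) $ i / sqrt (deg A i)" for i
  proof -
    have "deg A i > 0" using assms by simp
    then have "sqrt (deg A i) * sqrt (deg A i) = deg A i" "sqrt (deg A i) > 0"
      by simp_all
    then show ?thesis by (simp add: field_simps)
  qed
  ultimately show ?thesis
    using assms by (simp add: vec_eq_iff normLap_mult_vector deg_scale_def right_diff_distrib)
qed

lemma deg_scale_scaleR: "deg_scale A (c *\<^sub>R v) = c *\<^sub>R deg_scale A v"
  by (simp add: deg_scale_def vec_eq_iff)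

lemma deg_scale_unscale:
  assumes "\<forall>i. deg A i > 0"
  shows "deg_scale A (\<chi> i. w $ i / sqrt (deg A i)) = w"
  using assms by (simp add: deg_scale_def vec_eq_iff less_imp_neq[symmetric])

lemma deg_scale_inject:
  assumes "\<forall>i. deg A i > 0"
  shows "deg_scale A v = deg_scale A w \<longleftrightarrow> v = w"
  using assms by (auto simp: deg_scale_def vec_eq_iff less_imp_neq[symmetric])

lemma real_eigenvalues_sym_normLap:
  assumes deg_pos: "\<forall>i. deg A i > 0"
  shows "real_eigenvalues (sym_normLap A) = real_eigenvalues (normLap A)"
proof -
  have eig: "sym_normLap A *v deg_scale A v = l *\<^sub>R deg_scale A v \<longleftrightarrow> normLap A *v v = l *\<^sub>R v" for v l
    by (simp add: sym_normLap_deg_scale[OF deg_pos] deg_scale_inject[OF deg_pos] flip: deg_scale_scaleR)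
  have nz: "deg_scale A v \<noteq> 0 \<longleftrightarrow> v \<noteq> 0" for v
    using deg_scale_inject[OF deg_pos, of v 0] by (simp add: deg_scale_def vec_eq_iff)
  show ?thesis
  proof (rule set_eqI)
    fix l
    show "l \<in> real_eigenvalues (sym_normLap A) \<longleftrightarrow> l \<in> real_eigenvalues (normLap A)"
    proof
      assume "l \<in> real_eigenvalues (sym_normLap A)"
      then obtain w where "w \<noteq> 0" "sym_normLap A *v w = l *\<^sub>R w"
        unfolding real_eigenvalues_def by blast
      moreover obtain v where "w = deg_scale A v"
        using deg_scale_unscale[OF deg_pos] by metis
      ultimately show "l \<in> real_eigenvalues (normLap A)"
        unfolding real_eigenvalues_def using eig nz by blast
    next
      assume "l \<in> real_eigenvalues (normLap A)"
      then obtain v where "v \<noteq> 0" "normLap A *v v = l *\<^sub>R v"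
        unfolding real_eigenvalues_def by blast
      then show "l \<in> real_eigenvalues (sym_normLap A)"
        unfolding real_eigenvalues_def using eig nz by blast
    qed
  qed
qed

lemma inner_deg_scale: "deg_scale A v \<bullet> deg_scale A v = quad_form (Delta A) v"
  by (simp add: deg_scale_def inner_vec_def quad_form_Delta deg_nonneg power2_eq_square algebra_simps)

lemma quad_form_sym_normLap_deg_scale:
  assumes deg_pos: "\<forall>i. deg A i > 0"
  shows "quad_form (sym_normLap A) (deg_scale A v) = quad_form (Delta A) v - quad_form A v"
proof -
  have "deg_scale A v $ i * deg_scale A (normLap A *v v) $ i
      = deg A i * (v $ i)\<^sup>2 - v $ i * (A *v v) $ i" for i
  proof -
    have "deg A i > 0" using deg_pos by simp
    then show ?thesis
      by (simp add: deg_scale_def normLap_mult_vector[OF deg_pos] power2_eq_square field_simps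
          flip: real_sqrt_mult)
  qed
  then show ?thesis
    unfolding quad_form_Delta
    by (simp add: quad_form_def sym_normLap_deg_scale[OF deg_pos] inner_vec_def sum_subtractf)
qed

lemma lam_min_normLap_le:
  assumes sym: "transpose A = A" and deg_pos: "\<forall>i. deg A i > 0"
  shows "lam_min (normLap A) * quad_form (Delta A) v \<le> quad_form (Delta A) v - quad_form A v"
  using lam_min_le_quad_form[OF transpose_sym_normLap[OF sym], of "deg_scale A v"]
  by (simp add: lam_min_def real_eigenvalues_sym_normLap[OF deg_pos] inner_deg_scale
      quad_form_sym_normLap_deg_scale[OF deg_pos])

lemma lam_max_normLap_ge:
  assumes sym: "transpose A = A" and deg_pos: "\<forall>i. deg A i > 0"
  shows "quad_form (Delta A) v - quad_form A v \<le> lam_max (normLap A) * quad_form (Delta A) v"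
  using quad_form_le_lam_max[OF transpose_sym_normLap[OF sym], of "deg_scale A v"]
  by (simp add: lam_max_def real_eigenvalues_sym_normLap[OF deg_pos] inner_deg_scale
      quad_form_sym_normLap_deg_scale[OF deg_pos])

lemma lam_max_normLap_le_two:
  assumes sym: "transpose A = A" and deg_pos: "\<forall>i. deg A i > 0"
  shows "lam_max (normLap A) \<le> 2"
proof -
  have "lam_max (sym_normLap A) \<le> 2"
  proof (rule lam_max_leI[OF transpose_sym_normLap[OF sym]])
    fix w
    obtain v where w: "w = deg_scale A v"
      using deg_scale_unscale[OF deg_pos] by metis
    show "quad_form (sym_normLap A) w \<le> 2 * (w \<bullet> w)"
      using abs_quad_form_le_Delta[OF sym, of v]
      by (simp add: w quad_form_sym_normLap_deg_scale[OF deg_pos] inner_deg_scale)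
  qed
  then show ?thesis
    by (simp add: lam_max_def real_eigenvalues_sym_normLap[OF deg_pos])
qed

section \<open>The critical gains\<close>

lemma normLap_extreme_eigenvalue_bounds:
  fixes A :: "real^'n^'n::finite"
  assumes sym: "transpose A = A" and zero_diag: "\<forall>i. A $ i $ i = 0"
    and deg_pos: "\<forall>i. deg A i > 0"
    and cases: "structurally_balanced A \<or> lam_min (normLap A) < 2 - lam_max (normLap A)"
  shows "lam_min (normLap A) < 1" "lam_min (normLap A) + lam_max (normLap A) \<le> 2"
proof -
  obtain u where "quad_form A u < 0"
    using exists_quad_form_neg[OF sym zero_diag deg_pos] .
  moreover from this have "u \<noteq> 0"
    by (auto simp: quad_form_def)
  then have "quad_form (Delta A) u > 0"
    by (rule quad_form_Delta_pos[OF deg_pos])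
  ultimately have "1 * quad_form (Delta A) u < lam_max (normLap A) * quad_form (Delta A) u"
    using lam_max_normLap_ge[OF sym deg_pos, of u] by linarith
  then have "1 < lam_max (normLap A)"
    by (rule mult_right_less_imp_less) (use \<open>quad_form (Delta A) u > 0\<close> in simp)
  have "lam_min (normLap A) \<le> 0 \<and> lam_max (normLap A) \<le> 2
      \<or> lam_min (normLap A) + lam_max (normLap A) < 2"
    using cases
  proof
    assume "structurally_balanced A"
    then obtain v where "v \<noteq> 0" "quad_form A v = quad_form (Delta A) v"
      by (rule structurally_balanced_quad_form_eq_Delta)
    then have "lam_min (normLap A) * quad_form (Delta A) v \<le> 0 * quad_form (Delta A) v"
      using lam_min_normLap_le[OF sym deg_pos, of v] by simp
    then have "lam_min (normLap A) \<le> 0"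
      using quad_form_Delta_pos[OF deg_pos \<open>v \<noteq> 0\<close>] by (rule mult_right_le_imp_le)
    then show ?thesis
      using lam_max_normLap_le_two[OF sym deg_pos] by simp
  qed simp
  with \<open>1 < lam_max (normLap A)\<close>
  show "lam_min (normLap A) < 1" "lam_min (normLap A) + lam_max (normLap A) \<le> 2"
    by auto
qed

lemma lam_max_Lpi_pi1_le:
  fixes A :: "real^'n^'n::finite"
  assumes sym: "transpose A = A" and deg_pos: "\<forall>i. deg A i > 0"
    and "lam_min (normLap A) < 1" "lam_min (normLap A) + lam_max (normLap A) \<le> 2"
  shows "lam_max (Lpi A (pi1 A)) \<le> 2 * Max (range (deg A))"
proof (rule lam_max_leI[OF transpose_Lpi[OF sym]])
  fix u
  define gap where "gap = 1 - lam_min (normLap A)"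
  have "gap > 0" and pi1: "pi1 A = 1 / gap"
    using assms(3) by (simp_all add: gap_def pi1_def)
  have QD: "0 \<le> quad_form (Delta A) u"
    using abs_quad_form_le_Delta[OF sym, of u] by linarith
  have "- quad_form A u \<le> (lam_max (normLap A) - 1) * quad_form (Delta A) u"
    using lam_max_normLap_ge[OF sym deg_pos, of u] by (simp add: algebra_simps)
  also have "\<dots> \<le> gap * quad_form (Delta A) u"
    using assms(4) QD unfolding gap_def by (intro mult_right_mono) auto
  finally have "- pi1 A * quad_form A u \<le> quad_form (Delta A) u"
    using \<open>gap > 0\<close> by (simp add: pi1 field_simps)
  then have "quad_form (Lpi A (pi1 A)) u \<le> 2 * quad_form (Delta A) u"
    by (simp add: quad_form_Lpi)
  also have "\<dots> \<le> 2 * Max (range (deg A)) * (u \<bullet> u)"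
    using quad_form_Delta_le[of A u] by simp
  finally show "quad_form (Lpi A (pi1 A)) u \<le> 2 * Max (range (deg A)) * (u \<bullet> u)" .
qed

theorem proposition2:
  fixes A :: "real^'n^'n" and eps :: real
  assumes sym: "transpose A = A"
    and zero_diag: "\<forall>i. A$i$i = 0"
    and deg_pos: "\<forall>i. deg A i > 0"
    and conn: "connected_signed A"
    and eps_pos: "eps > 0"
    and step: "eps * Max (range (deg A)) < 1"
    and cases: "structurally_balanced A \<or>
                (\<not> structurally_balanced A \<and> lam_min (normLap A) < 2 - lam_max (normLap A))"
  shows "pi1 A < pi1d eps A"
proof -
  define D where "D = Max (range (deg A))"
  have "2 * D < 2 / eps" and "D < 2 / eps"
    using step eps_pos deg_nonneg[of A] Max_ge[of "range (deg A)"]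
    unfolding D_def by (auto simp: field_simps)
  have bounds: "lam_min (normLap A) < 1" "lam_min (normLap A) + lam_max (normLap A) \<le> 2"
    using normLap_extreme_eigenvalue_bounds[OF sym zero_diag deg_pos] cases by blast+
  have Lpi: "Lpi A p = Delta A - p *\<^sub>R A" for p
    by (simp add: Lpi_def)
  obtain u where "quad_form A u < 0"
    using exists_quad_form_neg[OF sym zero_diag deg_pos] .
  then obtain P where "P > 0" "2 / eps \<le> lam_max (Lpi A P)"
    unfolding Lpi using lam_max_pencil_unbounded[OF transpose_Delta sym] by blast
  moreover have "lam_max (Lpi A 0) \<le> D"
    unfolding D_def
    by (intro lam_max_leI[OF transpose_Lpi[OF sym]]) (simp add: quad_form_Lpi quad_form_Delta_le)
  moreover have "lam_max (Lpi A (pi1 A)) \<le> 2 * D"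
    unfolding D_def using lam_max_Lpi_pi1_le[OF sym deg_pos bounds] .
  moreover have "pi1 A > 0"
    using bounds(1) by (simp add: pi1_def)
  ultimately show ?thesis
    unfolding pi1d_def using convex_on_lam_max_pencil[OF transpose_Delta sym]
      \<open>2 * D < 2 / eps\<close> \<open>D < 2 / eps\<close>
    by (intro convex_first_crossing_gt[where g = "\<lambda>p. lam_max (Lpi A p)"]) (auto simp: Lpi)
qed

end
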